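(* There exists $\lambda_{**}>0$ such that for all $\lambda\in(0,\lambda_{**})$ one has $\mathcal{N}_\lambda^0=\{0\}$.
   Context: Let $s\in(0,1)$, $p>1$, $n>ps$, $p_s^*=\frac{np}{n-ps}$, $\Omega\subset\mathbb{R}^n$ a bounded smooth domain, $a,b>0$, $\theta>1$, $\alpha\in(0,1)$, $c\in L^\infty(\Omega)$, $c\ge0$, $\lambda>0$, and $1<p<p\theta<q\le p_s^*$. $X_0$ is the space of measurable $u$ on $\mathbb{R}^n$ vanishing a.e. outside $\Omega$ with $\|u\|:=\big(\int_{\mathbb{R}^{2n}}\frac{|u(x)-u(y)|^p}{|x-y|^{n+ps}}dxdy\big)^{1/p}<\infty$; $\|u\|_r$ is the $L^r(\Omega)$ norm; $u^+=\max\{u,0\}$. $f$ is homogeneous of order $q-1$ in the second variable, $F(x,t)=\int_0^tf(x,\tau)d\tau$, $qF=tf$, $|F(x,t)|\le\gamma|t|^q$. For $u\in X_0$ set $\varphi_u'(1)=a\|u\|^p+\|u\|_p^p+b\|u\|^{p\theta}-\int_\Omega c(u^+)^{1-\alpha}-\lambda q\int_\Omega F(x,u^+)$ and $\varphi_u''(1)=(p-1)(a\|u\|^p+\|u\|_p^p)+b(p\theta-1)\|u\|^{p\theta}+\alpha\int_\Omega c(u^+)^{1-\alpha}-\lambda q(q-1)\int_\Omega F(x,u^+)$; $\mathcal{N}_\lambda^0=\{u\in X_0:\varphi_u'(1)=0,\ \varphi_u''(1)=0\}$. *)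

theory Defs
  imports "HOL-Analysis.Analysis"
begin

text \<open>Encoded coinductively: g lies in a family S of functions, each continuous on U and each
  having all partial derivatives on U, these again belonging to S.\<close>
definition smooth_on :: "(real^'n) set \<Rightarrow> (real^'n \<Rightarrow> real) \<Rightarrow> bool" where
  "smooth_on U g \<longleftrightarrow> (\<exists>S. g \<in> S \<and> (\<forall>h\<in>S. continuous_on U h \<and>
      (\<forall>i. \<exists>h'\<in>S. \<forall>x\<in>U. ((\<lambda>t. h (x + t *\<^sub>R axis i 1)) has_real_derivative h' x) (at 0))))"

definition smooth_bounded_domain :: "(real^'n) set \<Rightarrow> bool" where
  "smooth_bounded_domain \<Omega> \<longleftrightarrow> open \<Omega> \<and> connected \<Omega> \<and> \<Omega> \<noteq> {} \<and> bounded \<Omega> \<and>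
     (\<forall>x\<in>frontier \<Omega>. \<exists>U \<phi>. open U \<and> x \<in> U \<and> smooth_on U \<phi> \<and>
        (\<forall>y\<in>U. \<exists>D. (\<phi> has_derivative D) (at y) \<and> D \<noteq> (\<lambda>_. 0)) \<and>
        \<Omega> \<inter> U = {y\<in>U. \<phi> y < 0})"

definition gagliardo_int :: "real \<Rightarrow> real \<Rightarrow> (real^'n \<Rightarrow> real) \<Rightarrow> ennreal" where
  "gagliardo_int p s u = (\<integral>\<^sup>+ z. ennreal (\<bar>u (fst z) - u (snd z)\<bar> powr p /
       norm (fst z - snd z) powr (real CARD('n) + p * s)) \<partial>(lebesgue :: ((real^'n) \<times> (real^'n)) measure))"

definition X0norm :: "real \<Rightarrow> real \<Rightarrow> (real^'n \<Rightarrow> real) \<Rightarrow> real" where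
  "X0norm p s u = enn2real (gagliardo_int p s u) powr (1 / p)"

definition X0 :: "real \<Rightarrow> real \<Rightarrow> (real^'n) set \<Rightarrow> (real^'n \<Rightarrow> real) set" where
  "X0 p s \<Omega> = {u. u \<in> borel_measurable lebesgue \<and>
      (AE x in lebesgue. x \<notin> \<Omega> \<longrightarrow> u x = 0) \<and> gagliardo_int p s u < \<infinity>}"

definition Lnorm :: "(real^'n) set \<Rightarrow> real \<Rightarrow> (real^'n \<Rightarrow> real) \<Rightarrow> real" where
  "Lnorm \<Omega> r u = (LINT x:\<Omega>|lebesgue. \<bar>u x\<bar> powr r) powr (1 / r)"

definition phi1 :: "real \<Rightarrow> real \<Rightarrow> (real^'n) set \<Rightarrow> real \<Rightarrow> real \<Rightarrow> real \<Rightarrow> real \<Rightarrow>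
    (real^'n \<Rightarrow> real) \<Rightarrow> real \<Rightarrow> real \<Rightarrow> (real^'n \<Rightarrow> real \<Rightarrow> real) \<Rightarrow> (real^'n \<Rightarrow> real) \<Rightarrow> real" where
  "phi1 p s \<Omega> a b \<theta> \<alpha> c lam q F u =
     a * X0norm p s u powr p + Lnorm \<Omega> p u powr p + b * X0norm p s u powr (p * \<theta>)
     - (LINT x:\<Omega>|lebesgue. c x * (max (u x) 0) powr (1 - \<alpha>))
     - lam * q * (LINT x:\<Omega>|lebesgue. F x (max (u x) 0))"

definition phi2 :: "real \<Rightarrow> real \<Rightarrow> (real^'n) set \<Rightarrow> real \<Rightarrow> real \<Rightarrow> real \<Rightarrow> real \<Rightarrow>
    (real^'n \<Rightarrow> real) \<Rightarrow> real \<Rightarrow> real \<Rightarrow> (real^'n \<Rightarrow> real \<Rightarrow> real) \<Rightarrow> (real^'n \<Rightarrow> real) \<Rightarrow> real" where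
  "phi2 p s \<Omega> a b \<theta> \<alpha> c lam q F u =
     (p - 1) * (a * X0norm p s u powr p + Lnorm \<Omega> p u powr p)
     + b * (p * \<theta> - 1) * X0norm p s u powr (p * \<theta>)
     + \<alpha> * (LINT x:\<Omega>|lebesgue. c x * (max (u x) 0) powr (1 - \<alpha>))
     - lam * q * (q - 1) * (LINT x:\<Omega>|lebesgue. F x (max (u x) 0))"

definition Nehari0 :: "real \<Rightarrow> real \<Rightarrow> (real^'n) set \<Rightarrow> real \<Rightarrow> real \<Rightarrow> real \<Rightarrow> real \<Rightarrow>
    (real^'n \<Rightarrow> real) \<Rightarrow> real \<Rightarrow> real \<Rightarrow> (real^'n \<Rightarrow> real \<Rightarrow> real) \<Rightarrow> (real^'n \<Rightarrow> real) set" where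
  "Nehari0 p s \<Omega> a b \<theta> \<alpha> c lam q F =
     {u \<in> X0 p s \<Omega>. phi1 p s \<Omega> a b \<theta> \<alpha> c lam q F u = 0 \<and> phi2 p s \<Omega> a b \<theta> \<alpha> c lam q F u = 0}"

end

(*
  On the Nehari set the identities phi_u'(1) = 0 and phi_u''(1) = 0 are linear in the concave
  term and in the nonlinear term, so either can be eliminated.  Eliminating the nonlinear term and
  absorbing the concave term by Young's inequality bounds the Gagliardo integral g = ||u||^p
  independently of lambda.  Eliminating the concave term gives
  (p - 1 + alpha) (a g + |u|_p^p) <= lambda C (|u|_p^p + g^e) with e = p_s^*/p > 1, by the fractional
  Sobolev inequality; as g is bounded, this forces g = 0 once lambda is small.

  Averaging over the ball of radius r
  around x bounds |w x|^p by r^(ps) times the Gagliardo density at x plus a multiple of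
  r^(ps - n) |w|_(pe)^p; optimizing r and integrating in x gives the inequality for functions with
  finite L^(pe) norm, and truncation with monotone convergence extends it to X_0.
*)
theory Submission
  imports Defs
begin

lemma powr_add_le_two_powr:
  fixes a b p :: real
  assumes "0 \<le> a" "0 \<le> b" "0 < p"
  shows "(a + b) powr p \<le> 2 powr p * (a powr p + b powr p)"
proof -
  have "(a + b) powr p \<le> (2 * max a b) powr p"
    using assms by (intro powr_mono2) auto
  also have "\<dots> = 2 powr p * max a b powr p"
    using assms by (simp add: powr_mult)
  also have "max a b powr p \<le> a powr p + b powr p"
    using assms by (cases "a \<le> b") (auto simp: max_def)
  finally show ?thesis by (simp add: mult_left_mono)
qed

lemma powr_le_powr_add_powr:
  fixes t p q r :: real
  assumes "0 \<le> t" "p \<le> q" "q \<le> r"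
  shows "t powr q \<le> t powr p + t powr r"
proof (cases "t \<le> 1")
  case True
  hence "t powr q \<le> t powr p" by (intro powr_mono') (use assms in auto)
  thus ?thesis using powr_ge_zero[of t r] by linarith
next
  case False
  hence "t powr q \<le> t powr r" by (intro powr_mono) (use assms in auto)
  thus ?thesis using powr_ge_zero[of t p] by linarith
qed

lemma powr_le_split_at:
  fixes t T p P :: real
  assumes "0 \<le> t" "0 < T" "0 \<le> p" "p \<le> P"
  shows "t powr p \<le> T powr p + T powr (p - P) * t powr P"
proof (cases "t \<le> T")
  case True
  hence "t powr p \<le> T powr p" using assms by (intro powr_mono2) auto
  thus ?thesis by (simp add: add_increasing2)
next
  case False
  hence t: "0 < t" "T \<le> t" using assms by auto
  have "t powr p = t powr (p - P) * t powr P" using t by (simp add: powr_add[symmetric])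
  also have "\<dots> \<le> T powr (p - P) * t powr P"
    using t assms by (intro mult_right_mono powr_mono2') auto
  finally show ?thesis by (simp add: add_increasing)
qed

lemma powr_le_const_add_small_powr:
  fixes \<beta> p \<delta> :: real
  assumes "0 \<le> \<beta>" "\<beta> < p" "0 < \<delta>"
  obtains E where "0 \<le> E" "\<And>t. 0 \<le> t \<Longrightarrow> t powr \<beta> \<le> E + \<delta> * t powr p"
proof
  define T where "T = \<delta> powr (1 / (\<beta> - p))"
  have T: "0 < T" unfolding T_def using assms by simp
  have "T powr (\<beta> - p) = \<delta>"
    unfolding T_def using assms by (simp add: powr_powr)
  thus "t powr \<beta> \<le> T powr \<beta> + \<delta> * t powr p" if "0 \<le> t" for t
    using powr_le_split_at[OF that T, of \<beta> p] assms by simp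
qed simp

text \<open>Choosing r with c2 P r^(\<sigma>-d) = h/2 balances the two terms.\<close>
lemma powr_le_of_bound_for_all_radii:
  fixes h Q P c1 c2 \<sigma> d :: real
  assumes h: "0 \<le> h" and Q: "0 \<le> Q" and P: "0 < P" and c: "0 < c1" "0 < c2"
    and \<sigma>: "0 < \<sigma>" "\<sigma> < d"
    and bound: "\<And>r. 0 < r \<Longrightarrow> h \<le> c1 * r powr \<sigma> * Q + c2 * P * r powr (\<sigma> - d)"
  shows "h powr (d / (d - \<sigma>)) \<le> 2 * c1 * (2 * c2 * P) powr (\<sigma> / (d - \<sigma>)) * Q"
proof (cases "h = 0")
  case True
  thus ?thesis using \<sigma> c Q P by simp
next
  case False
  hence hp: "0 < h" using h by auto
  define r where "r = (2 * c2 * P / h) powr (1 / (d - \<sigma>))"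
  have r: "0 < r" unfolding r_def using hp c P by simp
  have "1 / (d - \<sigma>) * (\<sigma> - d) = - 1" using \<sigma> by (simp add: field_simps)
  hence "r powr (\<sigma> - d) = h / (2 * c2 * P)"
    unfolding r_def powr_powr using hp c P by (simp add: powr_minus_divide)
  hence r1: "c2 * P * r powr (\<sigma> - d) = h / 2"
    using c P by simp
  have r2: "r powr \<sigma> = (2 * c2 * P) powr (\<sigma> / (d - \<sigma>)) / h powr (\<sigma> / (d - \<sigma>))"
    unfolding r_def by (simp add: powr_powr powr_divide)
  have "h \<le> 2 * c1 * Q * r powr \<sigma>" using bound[OF r] unfolding r1 by (simp add: ac_simps)
  hence "h * h powr (\<sigma> / (d - \<sigma>)) \<le> 2 * c1 * Q * (2 * c2 * P) powr (\<sigma> / (d - \<sigma>))"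
    using hp by (simp add: r2 field_simps)
  moreover have "d / (d - \<sigma>) = 1 + \<sigma> / (d - \<sigma>)" using \<sigma> by (simp add: field_simps)
  hence "h * h powr (\<sigma> / (d - \<sigma>)) = h powr (d / (d - \<sigma>))"
    using hp by (simp add: powr_add)
  ultimately show ?thesis by (simp add: ac_simps)
qed

lemma AE_lebesgue_pair:
  assumes "AE x in (lebesgue :: 'a::euclidean_space measure). P x"
  shows "AE z in (lebesgue :: ('a \<times> 'a) measure). P (fst z) \<and> P (snd z)"
proof -
  have "AE x in (lborel :: 'a measure). P x" using assms by (simp add: AE_completion_iff)
  then obtain N where N: "{x \<in> space lborel. \<not> P x} \<subseteq> N" "N \<in> null_sets (lborel :: 'a measure)"
    by (auto elim!: AE_E simp: null_sets_def)
  have "N \<times> UNIV \<in> null_sets (lborel \<Otimes>\<^sub>M (lborel :: 'a measure))"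
       "UNIV \<times> N \<in> null_sets (lborel \<Otimes>\<^sub>M (lborel :: 'a measure))"
    using N(2) by auto
  hence "N \<times> UNIV \<union> UNIV \<times> N \<in> null_sets (lborel :: ('a \<times> 'a) measure)"
    by (intro null_sets.Un) (simp_all add: lborel_prod)
  hence "AE z in (lborel :: ('a \<times> 'a) measure). P (fst z) \<and> P (snd z)"
    by (rule AE_I') (use N(1) in auto)
  thus ?thesis by (rule AE_completion)
qed

lemma gagliardo_int_cong_AE:
  assumes "AE x in lebesgue. u x = v x"
  shows "gagliardo_int p s u = gagliardo_int p s v"
  unfolding gagliardo_int_def
  using AE_lebesgue_pair[OF assms] by (intro nn_integral_cong_AE) auto

lemma gagliardo_int_null:
  assumes "AE x in lebesgue. u x = 0"
  shows "gagliardo_int p s u = 0"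
  using gagliardo_int_cong_AE[OF assms] by (simp add: gagliardo_int_def)

lemma gagliardo_int_iterated:
  fixes v :: "real^'n \<Rightarrow> real"
  assumes [measurable]: "v \<in> borel_measurable lborel"
  shows "gagliardo_int p s v = (\<integral>\<^sup>+ x. (\<integral>\<^sup>+ y. ennreal (\<bar>v x - v y\<bar> powr p /
           norm (x - y) powr (real CARD('n) + p * s)) \<partial>lborel) \<partial>lborel)"
proof -
  have "gagliardo_int p s v = (\<integral>\<^sup>+ z. ennreal (\<bar>v (fst z) - v (snd z)\<bar> powr p /
           norm (fst z - snd z) powr (real CARD('n) + p * s)) \<partial>(lborel \<Otimes>\<^sub>M lborel))"
    unfolding gagliardo_int_def nn_integral_completion lborel_prod ..
  also have "\<dots> = (\<integral>\<^sup>+ x. (\<integral>\<^sup>+ y. ennreal (\<bar>v x - v y\<bar> powr p /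
           norm (x - y) powr (real CARD('n) + p * s)) \<partial>lborel) \<partial>lborel)"
    by (subst lborel.nn_integral_fst[symmetric]) simp_all
  finally show ?thesis .
qed

lemma nn_integral_ball_diff_powr_le:
  fixes w :: "'a::euclidean_space \<Rightarrow> real"
  assumes [measurable]: "w \<in> borel_measurable lborel" and "0 \<le> \<kappa>"
  shows "(\<integral>\<^sup>+ y. ennreal (\<bar>w x - w y\<bar> powr p) * indicator (ball x r) y \<partial>lborel)
    \<le> ennreal (r powr \<kappa>) * (\<integral>\<^sup>+ y. ennreal (\<bar>w x - w y\<bar> powr p / norm (x - y) powr \<kappa>) \<partial>lborel)"
proof -
  have "ennreal (\<bar>w x - w y\<bar> powr p) * indicator (ball x r) y
      \<le> ennreal (r powr \<kappa>) * ennreal (\<bar>w x - w y\<bar> powr p / norm (x - y) powr \<kappa>)" for y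
  proof (cases "y \<in> ball x r \<and> y \<noteq> x")
    case True
    hence y: "0 < norm (x - y)" "norm (x - y) < r" by (auto simp: dist_norm)
    have "\<bar>w x - w y\<bar> powr p = norm (x - y) powr \<kappa> * (\<bar>w x - w y\<bar> powr p / norm (x - y) powr \<kappa>)"
      using y by simp
    also have "\<dots> \<le> r powr \<kappa> * (\<bar>w x - w y\<bar> powr p / norm (x - y) powr \<kappa>)"
      using y assms(2) by (intro mult_right_mono powr_mono2) auto
    finally have "ennreal (\<bar>w x - w y\<bar> powr p)
        \<le> ennreal (r powr \<kappa> * (\<bar>w x - w y\<bar> powr p / norm (x - y) powr \<kappa>))"
      by (rule ennreal_leI)
    thus ?thesis using True by (simp add: ennreal_mult'[symmetric])
  qed auto
  hence "(\<integral>\<^sup>+ y. ennreal (\<bar>w x - w y\<bar> powr p) * indicator (ball x r) y \<partial>lborel)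
      \<le> (\<integral>\<^sup>+ y. ennreal (r powr \<kappa>) * ennreal (\<bar>w x - w y\<bar> powr p / norm (x - y) powr \<kappa>) \<partial>lborel)"
    by (intro nn_integral_mono)
  also have "\<dots> = ennreal (r powr \<kappa>) * (\<integral>\<^sup>+ y. ennreal (\<bar>w x - w y\<bar> powr p / norm (x - y) powr \<kappa>) \<partial>lborel)"
    by (rule nn_integral_cmult) measurable
  finally show ?thesis .
qed

lemma nn_integral_indicator_powr_le:
  fixes w :: "'a \<Rightarrow> real"
  assumes [measurable]: "w \<in> borel_measurable M" "B \<in> sets M"
    and "0 < T" "0 \<le> p" "p \<le> P"
  shows "(\<integral>\<^sup>+ y. ennreal (\<bar>w y\<bar> powr p) * indicator B y \<partial>M)
    \<le> ennreal (T powr p) * emeasure M B + ennreal (T powr (p - P)) * (\<integral>\<^sup>+ y. ennreal (\<bar>w y\<bar> powr P) \<partial>M)"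
proof -
  have "(\<integral>\<^sup>+ y. ennreal (\<bar>w y\<bar> powr p) * indicator B y \<partial>M)
      \<le> (\<integral>\<^sup>+ y. ennreal (T powr p) * indicator B y + ennreal (T powr (p - P)) * ennreal (\<bar>w y\<bar> powr P) \<partial>M)"
  proof (intro nn_integral_mono)
    fix y
    have "\<bar>w y\<bar> powr p \<le> T powr p + T powr (p - P) * \<bar>w y\<bar> powr P"
      using assms by (intro powr_le_split_at) auto
    hence "ennreal (\<bar>w y\<bar> powr p) \<le> ennreal (T powr p) + ennreal (T powr (p - P)) * ennreal (\<bar>w y\<bar> powr P)"
      by (simp add: ennreal_mult[symmetric] ennreal_plus[symmetric] del: ennreal_plus)
    thus "ennreal (\<bar>w y\<bar> powr p) * indicator B y
        \<le> ennreal (T powr p) * indicator B y + ennreal (T powr (p - P)) * ennreal (\<bar>w y\<bar> powr P)"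
      by (cases "y \<in> B") (auto intro: add_increasing2)
  qed
  also have "\<dots> = ennreal (T powr p) * emeasure M B + ennreal (T powr (p - P)) * (\<integral>\<^sup>+ y. ennreal (\<bar>w y\<bar> powr P) \<partial>M)"
    by (simp add: nn_integral_add nn_integral_cmult nn_integral_cmult_indicator)
  finally show ?thesis .
qed

lemma powr_mult_emeasure_le:
  fixes w :: "'a \<Rightarrow> real"
  assumes [measurable]: "w \<in> borel_measurable M" "B \<in> sets M" and "0 < p"
  shows "ennreal (\<bar>w x\<bar> powr p) * emeasure M B
    \<le> ennreal (2 powr p) * (\<integral>\<^sup>+ y. ennreal (\<bar>w x - w y\<bar> powr p) * indicator B y \<partial>M)
      + ennreal (2 powr p) * (\<integral>\<^sup>+ y. ennreal (\<bar>w y\<bar> powr p) * indicator B y \<partial>M)"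
proof -
  have "ennreal (\<bar>w x\<bar> powr p) * emeasure M B = (\<integral>\<^sup>+ y. ennreal (\<bar>w x\<bar> powr p) * indicator B y \<partial>M)"
    by (simp add: nn_integral_cmult_indicator)
  also have "\<dots> \<le> (\<integral>\<^sup>+ y. ennreal (2 powr p) * (ennreal (\<bar>w x - w y\<bar> powr p) * indicator B y)
      + ennreal (2 powr p) * (ennreal (\<bar>w y\<bar> powr p) * indicator B y) \<partial>M)"
  proof (intro nn_integral_mono)
    fix y
    have "\<bar>w x\<bar> powr p \<le> (\<bar>w x - w y\<bar> + \<bar>w y\<bar>) powr p"
      using assms by (intro powr_mono2) auto
    also have "\<dots> \<le> 2 powr p * (\<bar>w x - w y\<bar> powr p + \<bar>w y\<bar> powr p)"
      using assms by (intro powr_add_le_two_powr) auto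
    finally have "ennreal (\<bar>w x\<bar> powr p)
        \<le> ennreal (2 powr p) * ennreal (\<bar>w x - w y\<bar> powr p) + ennreal (2 powr p) * ennreal (\<bar>w y\<bar> powr p)"
      by (simp add: ennreal_mult[symmetric] ennreal_plus[symmetric] distrib_left del: ennreal_plus)
    thus "ennreal (\<bar>w x\<bar> powr p) * indicator B y
        \<le> ennreal (2 powr p) * (ennreal (\<bar>w x - w y\<bar> powr p) * indicator B y)
          + ennreal (2 powr p) * (ennreal (\<bar>w y\<bar> powr p) * indicator B y)"
      by (cases "y \<in> B") auto
  qed
  also have "\<dots> = ennreal (2 powr p) * (\<integral>\<^sup>+ y. ennreal (\<bar>w x - w y\<bar> powr p) * indicator B y \<partial>M)
      + ennreal (2 powr p) * (\<integral>\<^sup>+ y. ennreal (\<bar>w y\<bar> powr p) * indicator B y \<partial>M)"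
    by (simp add: nn_integral_add nn_integral_cmult)
  finally show ?thesis .
qed

lemma powr_mult_measure_ball_le:
  fixes w :: "'a::euclidean_space \<Rightarrow> real"
  assumes [measurable]: "w \<in> borel_measurable lborel"
    and p: "0 < p" "p \<le> P" and \<kappa>: "0 \<le> \<kappa>" and T: "0 < T"
    and m: "emeasure lborel (ball x r) = ennreal m" "0 \<le> m"
    and S: "(\<integral>\<^sup>+ y. ennreal (\<bar>w y\<bar> powr P) \<partial>lborel) = ennreal S" "0 \<le> S"
    and Q: "(\<integral>\<^sup>+ y. ennreal (\<bar>w x - w y\<bar> powr p / norm (x - y) powr \<kappa>) \<partial>lborel) = ennreal Q" "0 \<le> Q"
  shows "\<bar>w x\<bar> powr p * m \<le> 2 powr p * (r powr \<kappa> * Q) + 2 powr p * (T powr p * m + T powr (p - P) * S)"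
proof -
  have "ennreal (\<bar>w x\<bar> powr p * m) = ennreal (\<bar>w x\<bar> powr p) * emeasure lborel (ball x r)"
    using m by (simp add: ennreal_mult)
  also have "\<dots> \<le> ennreal (2 powr p) * (\<integral>\<^sup>+ y. ennreal (\<bar>w x - w y\<bar> powr p) * indicator (ball x r) y \<partial>lborel)
      + ennreal (2 powr p) * (\<integral>\<^sup>+ y. ennreal (\<bar>w y\<bar> powr p) * indicator (ball x r) y \<partial>lborel)"
    using p by (intro powr_mult_emeasure_le) auto
  also have "\<dots> \<le> ennreal (2 powr p) * (ennreal (r powr \<kappa>) * ennreal Q)
      + ennreal (2 powr p) * (ennreal (T powr p) * ennreal m + ennreal (T powr (p - P)) * ennreal S)"
    using nn_integral_ball_diff_powr_le[of w \<kappa> x p r]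
      nn_integral_indicator_powr_le[of w lborel "ball x r" T p P] p \<kappa> T
    by (intro add_mono mult_left_mono) (auto simp: Q S m)
  also have "\<dots> = ennreal (2 powr p * (r powr \<kappa> * Q) + 2 powr p * (T powr p * m + T powr (p - P) * S))"
    using Q S m by (simp add: ennreal_mult)
  finally show ?thesis
    using Q S m by (subst (asm) ennreal_le_iff) auto
qed

text \<open>Splitting the L^p mass on the ball at the level T with T^(pe) |B| = S balances the two
  resulting terms.\<close>
lemma powr_le_ball_estimate:
  fixes w :: "'a::euclidean_space \<Rightarrow> real" and p \<sigma> r S Q :: real
  defines "d \<equiv> real DIM('a)"
  defines "e \<equiv> d / (d - \<sigma>)" and "\<omega> \<equiv> unit_ball_vol d"
  assumes w: "w \<in> borel_measurable lborel"
    and p: "0 < p" and \<sigma>: "0 < \<sigma>" "\<sigma> < d" and r: "0 < r"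
    and S: "(\<integral>\<^sup>+ y. ennreal (\<bar>w y\<bar> powr (p * e)) \<partial>lborel) = ennreal S" "0 < S"
    and Q: "(\<integral>\<^sup>+ y. ennreal (\<bar>w x - w y\<bar> powr p / norm (x - y) powr (d + \<sigma>)) \<partial>lborel) = ennreal Q"
      "0 \<le> Q"
  shows "\<bar>w x\<bar> powr p \<le> 2 powr p / \<omega> * r powr \<sigma> * Q + 2 powr (p + 1) * (S / \<omega>) powr (1 / e) * r powr (\<sigma> - d)"
proof -
  define m where "m = \<omega> * r powr d"
  have \<omega>: "0 < \<omega>" unfolding \<omega>_def d_def by simp
  have m: "0 < m" unfolding m_def using \<omega> r by simp
  have e: "1 \<le> e" unfolding e_def using \<sigma> by simp
  define T where "T = (S / m) powr (1 / (p * e))"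
  have T: "0 < T" unfolding T_def using S m by simp
  have "T powr (p - p * e) * S = T powr p / T powr (p * e) * S"
    using T by (simp add: powr_diff)
  also have "T powr (p * e) = S / m"
    unfolding T_def using S m p e by (simp add: powr_powr)
  finally have TS: "T powr (p - p * e) * S = T powr p * m"
    using S m by simp
  have "emeasure lborel (ball x r) = ennreal m"
    unfolding m_def \<omega>_def d_def using r by (simp add: emeasure_ball powr_realpow)
  hence "\<bar>w x\<bar> powr p * m \<le> 2 powr p * (r powr (d + \<sigma>) * Q) + 2 powr p * (T powr p * m + T powr (p - p * e) * S)"
    using p e \<sigma> T m S Q by (intro powr_mult_measure_ball_le[OF w]) auto
  also have "\<dots> = 2 powr p * (r powr (d + \<sigma>) * Q) + 2 powr (p + 1) * (T powr p * m)"
    unfolding TS by (simp add: powr_add)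
  finally have "\<bar>w x\<bar> powr p \<le> 2 powr p * (r powr (d + \<sigma>) / m) * Q + 2 powr (p + 1) * T powr p"
    using m by (simp add: field_simps)
  also have "r powr (d + \<sigma>) / m = r powr \<sigma> / \<omega>"
    unfolding m_def using r \<omega> by (simp add: powr_add)
  also have "T powr p = (S / \<omega>) powr (1 / e) * r powr (\<sigma> - d)"
  proof -
    have "T powr p = (S / \<omega>) powr (1 / e) / (r powr d) powr (1 / e)"
      unfolding T_def m_def using p e \<omega> r by (simp add: powr_powr powr_divide powr_mult)
    also have "(r powr d) powr (1 / e) = r powr (d - \<sigma>)"
      unfolding e_def using \<sigma> by (simp add: powr_powr)
    finally show ?thesis using r by (simp add: powr_diff divide_inverse powr_minus)
  qed
  finally show ?thesis by (simp add: ac_simps)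
qed

lemma pointwise_fractional_sobolev:
  fixes p \<sigma> :: real
  defines "d \<equiv> real DIM('a::euclidean_space)"
  defines "e \<equiv> d / (d - \<sigma>)"
  assumes p: "0 < p" and \<sigma>: "0 < \<sigma>" "\<sigma> < d"
  obtains K where "0 < K"
    "\<And>(w :: 'a \<Rightarrow> real) S x. w \<in> borel_measurable lborel \<Longrightarrow>
      (\<integral>\<^sup>+ y. ennreal (\<bar>w y\<bar> powr (p * e)) \<partial>lborel) = ennreal S \<Longrightarrow> 0 < S \<Longrightarrow>
      ennreal (\<bar>w x\<bar> powr (p * e))
        \<le> ennreal (K * S powr (\<sigma> / d)) * (\<integral>\<^sup>+ y. ennreal (\<bar>w x - w y\<bar> powr p / norm (x - y) powr (d + \<sigma>)) \<partial>lborel)"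
proof
  define \<omega> where "\<omega> = unit_ball_vol d"
  have \<omega>: "0 < \<omega>" unfolding \<omega>_def d_def by simp
  define c1 where "c1 = 2 powr p / \<omega>"
  define c2 where "c2 = 2 powr (p + 1)"
  have c: "0 < c1" "0 < c2" unfolding c1_def c2_def using \<omega> by simp_all
  define K where "K = 2 * c1 * (2 * c2) powr (\<sigma> / (d - \<sigma>)) * \<omega> powr (- (\<sigma> / d))"
  show K: "0 < K" unfolding K_def using c \<omega> by simp
  fix w :: "'a \<Rightarrow> real" and S x
  assume w: "w \<in> borel_measurable lborel"
    and S: "(\<integral>\<^sup>+ y. ennreal (\<bar>w y\<bar> powr (p * e)) \<partial>lborel) = ennreal S" "0 < S"
  show "ennreal (\<bar>w x\<bar> powr (p * e))
    \<le> ennreal (K * S powr (\<sigma> / d)) * (\<integral>\<^sup>+ y. ennreal (\<bar>w x - w y\<bar> powr p / norm (x - y) powr (d + \<sigma>)) \<partial>lborel)"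
  proof (cases "\<integral>\<^sup>+ y. ennreal (\<bar>w x - w y\<bar> powr p / norm (x - y) powr (d + \<sigma>)) \<partial>lborel" rule: ennreal_cases)
    case top
    thus ?thesis using K S by (simp add: ennreal_mult_top)
  next
    case (real Q)
    define P where "P = (S / \<omega>) powr (1 / e)"
    have P: "0 < P" unfolding P_def using S \<omega> by simp
    have "\<bar>w x\<bar> powr p \<le> c1 * r powr \<sigma> * Q + c2 * P * r powr (\<sigma> - d)" if "0 < r" for r
      using powr_le_ball_estimate[OF w p \<sigma>[unfolded d_def] that, of S x Q] S real
      unfolding c1_def c2_def P_def \<omega>_def d_def e_def by simp
    hence "(\<bar>w x\<bar> powr p) powr (d / (d - \<sigma>)) \<le> 2 * c1 * (2 * c2 * P) powr (\<sigma> / (d - \<sigma>)) * Q"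
      by (intro powr_le_of_bound_for_all_radii[OF _ _ P c \<sigma>]) (use real in auto)
    also have "(2 * c2 * P) powr (\<sigma> / (d - \<sigma>)) = (2 * c2) powr (\<sigma> / (d - \<sigma>)) * (S / \<omega>) powr (\<sigma> / d)"
      unfolding P_def e_def using c P \<sigma> by (simp add: powr_mult powr_powr)
    also have "(S / \<omega>) powr (\<sigma> / d) = S powr (\<sigma> / d) * \<omega> powr (- (\<sigma> / d))"
      using S \<omega> by (simp add: powr_divide powr_minus field_simps)
    finally have "\<bar>w x\<bar> powr (p * e) \<le> K * S powr (\<sigma> / d) * Q"
      unfolding K_def e_def by (simp add: powr_powr ac_simps)
    thus ?thesis using real K by (simp add: ennreal_mult[symmetric] ennreal_leI)
  qed
qed

lemma fractional_sobolev_finite: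
  fixes p \<sigma> :: real
  defines "d \<equiv> real DIM('a::euclidean_space)"
  defines "e \<equiv> d / (d - \<sigma>)"
  assumes p: "0 < p" and \<sigma>: "0 < \<sigma>" "\<sigma> < d"
  obtains K where "0 < K"
    "\<And>(w :: 'a \<Rightarrow> real) S G. w \<in> borel_measurable lborel \<Longrightarrow>
      (\<integral>\<^sup>+ y. ennreal (\<bar>w y\<bar> powr (p * e)) \<partial>lborel) = ennreal S \<Longrightarrow> 0 \<le> S \<Longrightarrow>
      (\<integral>\<^sup>+ x. \<integral>\<^sup>+ y. ennreal (\<bar>w x - w y\<bar> powr p / norm (x - y) powr (d + \<sigma>)) \<partial>lborel \<partial>lborel) = ennreal G \<Longrightarrow>
      0 \<le> G \<Longrightarrow> S \<le> (K * G) powr e"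
proof -
  obtain K where K: "0 < K" and pointwise: "\<And>(w :: 'a \<Rightarrow> real) S x. w \<in> borel_measurable lborel \<Longrightarrow>
      (\<integral>\<^sup>+ y. ennreal (\<bar>w y\<bar> powr (p * e)) \<partial>lborel) = ennreal S \<Longrightarrow> 0 < S \<Longrightarrow>
      ennreal (\<bar>w x\<bar> powr (p * e))
        \<le> ennreal (K * S powr (\<sigma> / d)) * (\<integral>\<^sup>+ y. ennreal (\<bar>w x - w y\<bar> powr p / norm (x - y) powr (d + \<sigma>)) \<partial>lborel)"
    using pointwise_fractional_sobolev[OF p \<sigma>[unfolded d_def]] unfolding d_def e_def by blast
  show thesis
  proof (rule that[OF K])
    fix w :: "'a \<Rightarrow> real" and S G
    assume w[measurable]: "w \<in> borel_measurable lborel"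
      and S: "(\<integral>\<^sup>+ y. ennreal (\<bar>w y\<bar> powr (p * e)) \<partial>lborel) = ennreal S" "0 \<le> S"
      and G: "(\<integral>\<^sup>+ x. \<integral>\<^sup>+ y. ennreal (\<bar>w x - w y\<bar> powr p / norm (x - y) powr (d + \<sigma>)) \<partial>lborel \<partial>lborel) = ennreal G"
        "0 \<le> G"
    show "S \<le> (K * G) powr e"
    proof (cases "S = 0")
      case False
      hence S0: "0 < S" using S by simp
      have "ennreal S \<le> (\<integral>\<^sup>+ x. ennreal (K * S powr (\<sigma> / d)) *
          (\<integral>\<^sup>+ y. ennreal (\<bar>w x - w y\<bar> powr p / norm (x - y) powr (d + \<sigma>)) \<partial>lborel) \<partial>lborel)"
        unfolding S(1)[symmetric] by (intro nn_integral_mono pointwise[OF w S(1) S0])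
      also have "\<dots> = ennreal (K * S powr (\<sigma> / d) * G)"
        using G K by (simp add: nn_integral_cmult ennreal_mult)
      finally have "S powr (\<sigma> / d) * S powr (1 - \<sigma> / d) \<le> S powr (\<sigma> / d) * (K * G)"
        using S0 K G by (subst (asm) ennreal_le_iff) (auto simp: powr_add[symmetric] ac_simps)
      hence "S powr (1 - \<sigma> / d) \<le> K * G" using S0 by simp
      hence "(S powr (1 - \<sigma> / d)) powr e \<le> (K * G) powr e"
        using \<sigma> unfolding e_def by (intro powr_mono2) auto
      moreover have "(1 - \<sigma> / d) * e = 1" unfolding e_def using \<sigma> by (simp add: field_simps)
      ultimately show ?thesis using S0 by (simp add: powr_powr)
    qed simp
  qed
qed

lemma abs_truncate_diff_le: "\<bar>max (- N) (min N a) - max (- N) (min N b)\<bar> \<le> \<bar>a - b\<bar>" for N a b :: real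
  unfolding max_def min_def by (auto simp: abs_if)

lemma abs_truncate: "0 \<le> N \<Longrightarrow> \<bar>max (- N) (min N a)\<bar> = min N \<bar>a\<bar>" for N a :: real
  by (simp add: max_def min_def abs_if)

lemma SUP_ennreal_min_powr:
  fixes a q :: real
  assumes "0 \<le> a" "0 < q"
  shows "(SUP N::nat. ennreal (min (real N) a powr q)) = ennreal (a powr q)"
proof (rule antisym)
  show "(SUP N::nat. ennreal (min (real N) a powr q)) \<le> ennreal (a powr q)"
    using assms by (intro SUP_least ennreal_leI powr_mono2) auto
  have "min (real (nat \<lceil>a\<rceil>)) a = a" by linarith
  thus "ennreal (a powr q) \<le> (SUP N::nat. ennreal (min (real N) a powr q))"
    by (intro SUP_upper2[of "nat \<lceil>a\<rceil>"]) auto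
qed

lemma nn_integral_powr_eq_SUP_truncate:
  fixes v :: "'a \<Rightarrow> real"
  assumes [measurable]: "v \<in> borel_measurable M" and P: "0 < P"
  shows "(\<integral>\<^sup>+ x. ennreal (\<bar>v x\<bar> powr P) \<partial>M)
    = (SUP N. \<integral>\<^sup>+ x. ennreal (\<bar>max (- real N) (min (real N) (v x))\<bar> powr P) \<partial>M)"
proof -
  have "(\<integral>\<^sup>+ x. ennreal (\<bar>v x\<bar> powr P) \<partial>M)
      = (\<integral>\<^sup>+ x. (SUP N. ennreal (\<bar>max (- real N) (min (real N) (v x))\<bar> powr P)) \<partial>M)"
    using P by (simp add: abs_truncate SUP_ennreal_min_powr)
  also have "\<dots> = (SUP N. \<integral>\<^sup>+ x. ennreal (\<bar>max (- real N) (min (real N) (v x))\<bar> powr P) \<partial>M)"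
    using P by (intro nn_integral_monotone_convergence_SUP incseq_SucI le_funI ennreal_leI powr_mono2)
      (auto simp: abs_truncate)
  finally show ?thesis .
qed

lemma nn_integral_powr_truncate_finite:
  fixes v :: "'a::euclidean_space \<Rightarrow> real"
  assumes [measurable]: "v \<in> borel_measurable lborel" and bounded: "bounded {x. v x \<noteq> 0}"
    and "0 \<le> P"
  shows "(\<integral>\<^sup>+ x. ennreal (\<bar>max (- real N) (min (real N) (v x))\<bar> powr P) \<partial>lborel) < \<infinity>"
proof -
  have "(\<integral>\<^sup>+ x. ennreal (\<bar>max (- real N) (min (real N) (v x))\<bar> powr P) \<partial>lborel)
      \<le> (\<integral>\<^sup>+ x. ennreal (real N powr P) * indicator {x. v x \<noteq> 0} x \<partial>lborel)"
    using assms(3) by (intro nn_integral_mono) (auto simp: abs_truncate indicator_def intro!: ennreal_leI powr_mono2)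
  also have "\<dots> = ennreal (real N powr P) * emeasure lborel {x. v x \<noteq> 0}"
    by (intro nn_integral_cmult_indicator) measurable
  also have "\<dots> < \<infinity>"
    using emeasure_bounded_finite[OF bounded] by (simp add: ennreal_mult_less_top)
  finally show ?thesis .
qed

lemma fractional_sobolev_bounded_support:
  fixes p \<sigma> :: real
  defines "d \<equiv> real DIM('a::euclidean_space)"
  defines "e \<equiv> d / (d - \<sigma>)"
  assumes p: "0 < p" and \<sigma>: "0 < \<sigma>" "\<sigma> < d"
  obtains K where "0 < K"
    "\<And>(v :: 'a \<Rightarrow> real) G. v \<in> borel_measurable lborel \<Longrightarrow> bounded {x. v x \<noteq> 0} \<Longrightarrow>
      (\<integral>\<^sup>+ x. \<integral>\<^sup>+ y. ennreal (\<bar>v x - v y\<bar> powr p / norm (x - y) powr (d + \<sigma>)) \<partial>lborel \<partial>lborel) = ennreal G \<Longrightarrow>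
      0 \<le> G \<Longrightarrow> (\<integral>\<^sup>+ x. ennreal (\<bar>v x\<bar> powr (p * e)) \<partial>lborel) \<le> ennreal ((K * G) powr e)"
proof -
  have e: "1 \<le> e" unfolding e_def using \<sigma> by simp
  obtain K where K: "0 < K" and finite: "\<And>(w :: 'a \<Rightarrow> real) S G. w \<in> borel_measurable lborel \<Longrightarrow>
      (\<integral>\<^sup>+ y. ennreal (\<bar>w y\<bar> powr (p * e)) \<partial>lborel) = ennreal S \<Longrightarrow> 0 \<le> S \<Longrightarrow>
      (\<integral>\<^sup>+ x. \<integral>\<^sup>+ y. ennreal (\<bar>w x - w y\<bar> powr p / norm (x - y) powr (d + \<sigma>)) \<partial>lborel \<partial>lborel) = ennreal G \<Longrightarrow>
      0 \<le> G \<Longrightarrow> S \<le> (K * G) powr e"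
    using fractional_sobolev_finite[OF p \<sigma>[unfolded d_def]] unfolding d_def e_def by blast
  show thesis
  proof (rule that[OF K])
    fix v :: "'a \<Rightarrow> real" and G
    assume v[measurable]: "v \<in> borel_measurable lborel" and bounded: "bounded {x. v x \<noteq> 0}"
      and G: "(\<integral>\<^sup>+ x. \<integral>\<^sup>+ y. ennreal (\<bar>v x - v y\<bar> powr p / norm (x - y) powr (d + \<sigma>)) \<partial>lborel \<partial>lborel) = ennreal G"
        "0 \<le> G"
    define w where "w N x = max (- real N) (min (real N) (v x))" for N :: nat and x
    have w[measurable]: "w N \<in> borel_measurable lborel" for N unfolding w_def by measurable
    have truncated: "(\<integral>\<^sup>+ x. ennreal (\<bar>w N x\<bar> powr (p * e)) \<partial>lborel) \<le> ennreal ((K * G) powr e)" for N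
    proof -
      define SN where "SN = (\<integral>\<^sup>+ x. ennreal (\<bar>w N x\<bar> powr (p * e)) \<partial>lborel)"
      define GN where "GN = (\<integral>\<^sup>+ x. \<integral>\<^sup>+ y. ennreal (\<bar>w N x - w N y\<bar> powr p / norm (x - y) powr (d + \<sigma>)) \<partial>lborel \<partial>lborel)"
      have SN: "SN < \<infinity>"
        unfolding SN_def w_def using p e by (intro nn_integral_powr_truncate_finite[OF v bounded]) simp
      have "GN \<le> ennreal G"
        unfolding GN_def G(1)[symmetric] w_def using p
        by (intro nn_integral_mono ennreal_leI divide_right_mono powr_mono2 abs_truncate_diff_le) auto
      hence GN: "GN < \<infinity>" "enn2real GN \<le> G"
        using G(2) by (auto simp: le_less_trans enn2real_leI)
      have "enn2real SN \<le> (K * enn2real GN) powr e"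
        using SN GN unfolding SN_def GN_def by (intro finite[OF w]) (simp_all add: less_top)
      also have "\<dots> \<le> (K * G) powr e"
        using GN K e by (intro powr_mono2 mult_left_mono) auto
      finally have "ennreal (enn2real SN) \<le> ennreal ((K * G) powr e)" by (rule ennreal_leI)
      moreover have "ennreal (enn2real SN) = SN" using SN by (simp add: less_top)
      ultimately show ?thesis unfolding SN_def by (simp only:)
    qed
    have "(\<integral>\<^sup>+ x. ennreal (\<bar>v x\<bar> powr (p * e)) \<partial>lborel) = (SUP N. (\<integral>\<^sup>+ x. ennreal (\<bar>w N x\<bar> powr (p * e)) \<partial>lborel))"
      unfolding w_def using p e by (intro nn_integral_powr_eq_SUP_truncate) auto
    also have "\<dots> \<le> ennreal ((K * G) powr e)"
      by (intro SUP_least truncated)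
    finally show "(\<integral>\<^sup>+ x. ennreal (\<bar>v x\<bar> powr (p * e)) \<partial>lborel) \<le> ennreal ((K * G) powr e)" .
  qed
qed

lemma X0_fractional_sobolev:
  fixes \<Omega> :: "(real^'n) set" and p s :: real
  defines "e \<equiv> real CARD('n) / (real CARD('n) - p * s)"
  assumes s: "0 < s" and p: "0 < p" and n: "p * s < real CARD('n)" and bounded: "bounded \<Omega>"
  obtains K where "0 < K"
    "\<And>u. u \<in> X0 p s \<Omega> \<Longrightarrow>
      (\<integral>\<^sup>+ x. ennreal (\<bar>u x\<bar> powr (p * e)) \<partial>lebesgue) \<le> ennreal ((K * enn2real (gagliardo_int p s u)) powr e)"
proof -
  obtain K where K: "0 < K" and sobolev: "\<And>(v :: real^'n \<Rightarrow> real) G. v \<in> borel_measurable lborel \<Longrightarrow>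
      bounded {x. v x \<noteq> 0} \<Longrightarrow>
      (\<integral>\<^sup>+ x. \<integral>\<^sup>+ y. ennreal (\<bar>v x - v y\<bar> powr p / norm (x - y) powr (real CARD('n) + p * s)) \<partial>lborel \<partial>lborel)
        = ennreal G \<Longrightarrow>
      0 \<le> G \<Longrightarrow> (\<integral>\<^sup>+ x. ennreal (\<bar>v x\<bar> powr (p * e)) \<partial>lborel) \<le> ennreal ((K * G) powr e)"
    using fractional_sobolev_bounded_support[of p "p * s", where 'a="real^'n"] p s n
    unfolding e_def by auto
  obtain R where R: "\<Omega> \<subseteq> ball 0 R" using bounded_subset_ballD[OF bounded] by blast
  show thesis
  proof (rule that[OF K])
    fix u assume "u \<in> X0 p s \<Omega>"
    hence u: "u \<in> borel_measurable lebesgue" "AE x in lebesgue. x \<notin> \<Omega> \<longrightarrow> u x = 0"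
      "gagliardo_int p s u < \<infinity>"
      unfolding X0_def by auto
    obtain v0 where v0: "v0 \<in> borel_measurable lborel" and uv0: "AE x in lborel. u x = v0 x"
      using completion_ex_borel_measurable_real[OF u(1)] by blast
    define v where "v x = indicator (ball 0 R) x * v0 x" for x
    have v[measurable]: "v \<in> borel_measurable lborel"
      unfolding v_def using v0 by (intro borel_measurable_times borel_measurable_indicator) auto
    have "{x. v x \<noteq> 0} \<subseteq> ball 0 R" unfolding v_def by (auto simp: indicator_def)
    hence v_bounded: "bounded {x. v x \<noteq> 0}" by (rule bounded_subset[rotated]) simp
    have uv_borel: "AE x in lborel. u x = v x"
      using uv0 u(2)[unfolded AE_completion_iff] by eventually_elim (use R in \<open>auto simp: v_def\<close>)
    hence uv: "AE x in lebesgue. u x = v x" by (rule AE_completion)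
    have G: "gagliardo_int p s u = ennreal (enn2real (gagliardo_int p s u))"
      using u(3) by (simp add: less_top)
    have "(\<integral>\<^sup>+ x. ennreal (\<bar>u x\<bar> powr (p * e)) \<partial>lebesgue) = (\<integral>\<^sup>+ x. ennreal (\<bar>v x\<bar> powr (p * e)) \<partial>lborel)"
      unfolding nn_integral_completion using uv_borel by (intro nn_integral_cong_AE) auto
    also have "\<dots> \<le> ennreal ((K * enn2real (gagliardo_int p s u)) powr e)"
      using G by (intro sobolev[OF v v_bounded])
        (simp_all add: gagliardo_int_iterated[OF v, symmetric] gagliardo_int_cong_AE[OF uv])
    finally show "(\<integral>\<^sup>+ x. ennreal (\<bar>u x\<bar> powr (p * e)) \<partial>lebesgue)
        \<le> ennreal ((K * enn2real (gagliardo_int p s u)) powr e)" .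
  qed
qed

lemma set_integral_le_integrable_bound:
  fixes h k :: "'a \<Rightarrow> real"
  assumes k: "set_integrable M A k" and hk: "AE x in M. x \<in> A \<longrightarrow> h x \<le> k x"
    and k0: "AE x in M. x \<in> A \<longrightarrow> 0 \<le> k x"
  shows "(LINT x:A|M. h x) \<le> (LINT x:A|M. k x)"
proof (cases "set_integrable M A h")
  case True
  thus ?thesis using k hk by (intro set_integral_mono_AE) auto
next
  case False
  hence "(LINT x:A|M. h x) = 0"
    unfolding set_integrable_def set_lebesgue_integral_def by (rule not_integrable_integral_eq)
  moreover have "0 \<le> (LINT x:A|M. k x)"
    unfolding set_lebesgue_integral_def
    by (intro integral_nonneg_AE) (use k0 in \<open>eventually_elim, simp add: indicator_def\<close>)
  ultimately show ?thesis by simp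
qed

lemma set_integrable_powr:
  fixes u :: "'a::euclidean_space \<Rightarrow> real"
  assumes u: "u \<in> borel_measurable lebesgue"
    and finite: "(\<integral>\<^sup>+ x. ennreal (\<bar>u x\<bar> powr r) \<partial>lebesgue) < \<infinity>"
    and A: "A \<in> sets lebesgue" "emeasure lebesgue A < \<infinity>"
    and a: "0 \<le> a" "a \<le> r"
  shows "set_integrable lebesgue A (\<lambda>x. \<bar>u x\<bar> powr a)"
proof (rule set_integrable_bound)
  have "integrable lebesgue (\<lambda>x. \<bar>u x\<bar> powr r)"
    using finite u by (subst integrable_iff_bounded) auto
  hence "integrable lebesgue (\<lambda>x. indicator A x + \<bar>u x\<bar> powr r * indicator A x)"
    using A by (intro Bochner_Integration.integrable_add integrable_real_mult_indicator) auto
  thus "set_integrable lebesgue A (\<lambda>x. 1 + \<bar>u x\<bar> powr r)"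
    unfolding set_integrable_def by (simp add: algebra_simps)
  show "set_borel_measurable lebesgue A (\<lambda>x. \<bar>u x\<bar> powr a)"
    unfolding set_borel_measurable_def using A u by measurable
  have "\<bar>u x\<bar> powr a \<le> \<bar>u x\<bar> powr 0 + \<bar>u x\<bar> powr r" for x
    using a by (intro powr_le_powr_add_powr) auto
  hence "norm (\<bar>u x\<bar> powr a) \<le> norm (1 + \<bar>u x\<bar> powr r)" for x
    by (smt (verit) norm_of_real powr_ge_zero powr_zero_eq_one real_norm_def)
  thus "AE x in lebesgue. x \<in> A \<longrightarrow> norm (\<bar>u x\<bar> powr a) \<le> norm (1 + \<bar>u x\<bar> powr r)"
    by simp
qed

lemma set_integral_powr_le:
  fixes u :: "'a::euclidean_space \<Rightarrow> real"
  assumes u: "u \<in> borel_measurable lebesgue" and A: "A \<in> sets lebesgue"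
    and bound: "(\<integral>\<^sup>+ x. ennreal (\<bar>u x\<bar> powr r) \<partial>lebesgue) \<le> ennreal B" and B: "0 \<le> B"
  shows "(LINT x:A|lebesgue. \<bar>u x\<bar> powr r) \<le> B"
proof -
  have "(LINT x:A|lebesgue. \<bar>u x\<bar> powr r) = enn2real (\<integral>\<^sup>+ x. ennreal (indicator A x *\<^sub>R \<bar>u x\<bar> powr r) \<partial>lebesgue)"
    unfolding set_lebesgue_integral_def using A u
    by (intro integral_eq_nn_integral) (measurable, auto)
  also have "\<dots> \<le> enn2real (ennreal B)"
  proof (rule enn2real_mono)
    show "(\<integral>\<^sup>+ x. ennreal (indicator A x *\<^sub>R \<bar>u x\<bar> powr r) \<partial>lebesgue) \<le> ennreal B"
      using bound by (elim order_trans[rotated], intro nn_integral_mono) (auto simp: indicator_def)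
  qed simp
  finally show ?thesis using B by simp
qed

lemma set_integral_concave_term_le:
  fixes u c :: "'a::euclidean_space \<Rightarrow> real"
  assumes A: "A \<in> sets lebesgue" "emeasure lebesgue A < \<infinity>"
    and u: "set_integrable lebesgue A (\<lambda>x. \<bar>u x\<bar> powr p)" and p: "0 \<le> p"
    and c: "AE x in lebesgue. x \<in> A \<longrightarrow> 0 \<le> c x \<and> c x \<le> M"
    and young: "\<And>t. 0 \<le> t \<Longrightarrow> t powr \<beta> \<le> E + \<delta> * t powr p"
    and "0 \<le> M" "0 \<le> E" "0 \<le> \<delta>"
  shows "(LINT x:A|lebesgue. c x * max (u x) 0 powr \<beta>)
    \<le> M * (E * measure lebesgue A + \<delta> * (LINT x:A|lebesgue. \<bar>u x\<bar> powr p))"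
proof -
  have E: "set_integrable lebesgue A (\<lambda>_. E)"
    using A unfolding set_integrable_def by simp
  have "(LINT x:A|lebesgue. c x * max (u x) 0 powr \<beta>) \<le> (LINT x:A|lebesgue. M * (E + \<delta> * \<bar>u x\<bar> powr p))"
  proof (rule set_integral_le_integrable_bound)
    show "set_integrable lebesgue A (\<lambda>x. M * (E + \<delta> * \<bar>u x\<bar> powr p))"
      using E u by (intro set_integrable_mult_right set_integral_add(1)) auto
    have bound: "c x * max (u x) 0 powr \<beta> \<le> M * (E + \<delta> * \<bar>u x\<bar> powr p)" if "0 \<le> c x" "c x \<le> M" for x
    proof -
      have "c x * max (u x) 0 powr \<beta> \<le> M * (E + \<delta> * max (u x) 0 powr p)"
        using that young[of "max (u x) 0"] assms by (intro mult_mono) auto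
      also have "\<dots> \<le> M * (E + \<delta> * \<bar>u x\<bar> powr p)"
        using assms by (intro mult_left_mono add_left_mono powr_mono2) auto
      finally show ?thesis .
    qed
    show "AE x in lebesgue. x \<in> A \<longrightarrow> c x * max (u x) 0 powr \<beta> \<le> M * (E + \<delta> * \<bar>u x\<bar> powr p)"
      using c by eventually_elim (auto intro: bound)
    show "AE x in lebesgue. x \<in> A \<longrightarrow> 0 \<le> M * (E + \<delta> * \<bar>u x\<bar> powr p)"
      using assms by simp
  qed
  also have "\<dots> = M * (E * measure lebesgue A + \<delta> * (LINT x:A|lebesgue. \<bar>u x\<bar> powr p))"
    using A E u by (simp add: set_integral_const ac_simps)
  finally show ?thesis .
qed

lemma set_integral_nonlinear_term_le:
  fixes u :: "'a::euclidean_space \<Rightarrow> real" and F :: "'a \<Rightarrow> real \<Rightarrow> real"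
  assumes u: "set_integrable lebesgue A (\<lambda>x. \<bar>u x\<bar> powr p)" "set_integrable lebesgue A (\<lambda>x. \<bar>u x\<bar> powr r)"
    and F: "\<And>x t. \<bar>F x t\<bar> \<le> \<gamma> * \<bar>t\<bar> powr q" and "0 \<le> p" "p \<le> q" "q \<le> r"
  shows "(LINT x:A|lebesgue. F x (max (u x) 0))
    \<le> \<gamma> * ((LINT x:A|lebesgue. \<bar>u x\<bar> powr p) + (LINT x:A|lebesgue. \<bar>u x\<bar> powr r))"
proof -
  have \<gamma>: "0 \<le> \<gamma>" using F[of undefined 1] by simp
  have "F x (max (u x) 0) \<le> \<gamma> * (\<bar>u x\<bar> powr p + \<bar>u x\<bar> powr r)" for x
  proof -
    have "F x (max (u x) 0) \<le> \<gamma> * \<bar>max (u x) 0\<bar> powr q" using F abs_le_D1 by blast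
    also have "\<dots> \<le> \<gamma> * \<bar>u x\<bar> powr q"
      using \<gamma> assms by (intro mult_left_mono powr_mono2) auto
    also have "\<dots> \<le> \<gamma> * (\<bar>u x\<bar> powr p + \<bar>u x\<bar> powr r)"
      using \<gamma> assms by (intro mult_left_mono powr_le_powr_add_powr) auto
    finally show ?thesis .
  qed
  hence "(LINT x:A|lebesgue. F x (max (u x) 0)) \<le> (LINT x:A|lebesgue. \<gamma> * (\<bar>u x\<bar> powr p + \<bar>u x\<bar> powr r))"
    using u \<gamma> by (intro set_integral_le_integrable_bound set_integrable_mult_right set_integral_add(1)) auto
  also have "\<dots> = \<gamma> * ((LINT x:A|lebesgue. \<bar>u x\<bar> powr p) + (LINT x:A|lebesgue. \<bar>u x\<bar> powr r))"
    using u by simp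
  finally show ?thesis .
qed

lemma X0norm_powr:
  assumes "0 < p"
  shows "X0norm p s u powr p = enn2real (gagliardo_int p s u)"
    and "X0norm p s u powr (p * t) = enn2real (gagliardo_int p s u) powr t"
  unfolding X0norm_def using assms by (simp_all add: powr_powr)

lemma Lnorm_powr:
  assumes "0 < r"
  shows "Lnorm A r u powr r = (LINT x:A|lebesgue. \<bar>u x\<bar> powr r)"
proof -
  have "0 \<le> (LINT x:A|lebesgue. \<bar>u x\<bar> powr r)"
    unfolding set_lebesgue_integral_def by (intro Bochner_Integration.integral_nonneg) simp
  thus ?thesis unfolding Lnorm_def using assms by (simp add: powr_powr)
qed

lemma Nehari0_fibering_identities:
  assumes "u \<in> Nehari0 p s \<Omega> a b \<theta> \<alpha> c lam q F" "0 < p"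
  defines "g \<equiv> enn2real (gagliardo_int p s u)" and "I \<equiv> LINT x:\<Omega>|lebesgue. \<bar>u x\<bar> powr p"
    and "C \<equiv> LINT x:\<Omega>|lebesgue. c x * max (u x) 0 powr (1 - \<alpha>)"
    and "D \<equiv> LINT x:\<Omega>|lebesgue. F x (max (u x) 0)"
  shows "a * g + I + b * g powr \<theta> - C - lam * q * D = 0"
    and "(p - 1) * (a * g + I) + b * (p * \<theta> - 1) * g powr \<theta> + \<alpha> * C - lam * q * (q - 1) * D = 0"
  using assms unfolding Nehari0_def phi1_def phi2_def by (simp_all add: X0norm_powr Lnorm_powr)

lemma fibering_term_estimates:
  fixes u c :: "'a::euclidean_space \<Rightarrow> real" and F :: "'a \<Rightarrow> real \<Rightarrow> real"
  assumes A: "A \<in> lmeasurable" and u: "u \<in> borel_measurable lebesgue"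
    and sobolev: "(\<integral>\<^sup>+ x. ennreal (\<bar>u x\<bar> powr r) \<partial>lebesgue) \<le> ennreal S" and "0 \<le> S"
    and pqr: "0 < p" "p \<le> q" "q \<le> r"
    and c: "AE x in lebesgue. x \<in> A \<longrightarrow> 0 \<le> c x \<and> c x \<le> M" and "0 \<le> M"
    and young: "\<And>t. 0 \<le> t \<Longrightarrow> t powr \<beta> \<le> E + \<delta> * t powr p" and "0 \<le> E" "0 \<le> \<delta>"
    and F: "\<And>x t. \<bar>F x t\<bar> \<le> \<gamma> * \<bar>t\<bar> powr q"
  shows "(LINT x:A|lebesgue. c x * max (u x) 0 powr \<beta>)
      \<le> M * (E * measure lebesgue A + \<delta> * (LINT x:A|lebesgue. \<bar>u x\<bar> powr p))"
    and "(LINT x:A|lebesgue. F x (max (u x) 0)) \<le> \<gamma> * ((LINT x:A|lebesgue. \<bar>u x\<bar> powr p) + S)"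
proof -
  have A': "A \<in> sets lebesgue" "emeasure lebesgue A < \<infinity>" using A by (auto simp: fmeasurable_def)
  have finite: "(\<integral>\<^sup>+ x. ennreal (\<bar>u x\<bar> powr r) \<partial>lebesgue) < \<infinity>"
    using sobolev by (simp add: le_less_trans)
  have integrable: "set_integrable lebesgue A (\<lambda>x. \<bar>u x\<bar> powr p)" "set_integrable lebesgue A (\<lambda>x. \<bar>u x\<bar> powr r)"
    using pqr by (auto intro!: set_integrable_powr[OF u finite A'])
  show "(LINT x:A|lebesgue. c x * max (u x) 0 powr \<beta>)
      \<le> M * (E * measure lebesgue A + \<delta> * (LINT x:A|lebesgue. \<bar>u x\<bar> powr p))"
    using pqr assms by (intro set_integral_concave_term_le[OF A' integrable(1) _ c young]) auto
  have "(LINT x:A|lebesgue. F x (max (u x) 0))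
      \<le> \<gamma> * ((LINT x:A|lebesgue. \<bar>u x\<bar> powr p) + (LINT x:A|lebesgue. \<bar>u x\<bar> powr r))"
    using pqr by (intro set_integral_nonlinear_term_le[OF integrable F]) auto
  also have "\<dots> \<le> \<gamma> * ((LINT x:A|lebesgue. \<bar>u x\<bar> powr p) + S)"
    using F[of undefined 1] set_integral_powr_le[OF u A'(1) sobolev \<open>0 \<le> S\<close>] by (intro mult_left_mono) auto
  finally show "(LINT x:A|lebesgue. F x (max (u x) 0)) \<le> \<gamma> * ((LINT x:A|lebesgue. \<bar>u x\<bar> powr p) + S)" .
qed

lemma AE_zero_if_nn_integral_powr_zero:
  assumes "u \<in> borel_measurable lebesgue" "(\<integral>\<^sup>+ x. ennreal (\<bar>u x\<bar> powr r) \<partial>lebesgue) \<le> 0"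
  shows "AE x in lebesgue. u x = 0"
proof -
  have "AE x in lebesgue. ennreal (\<bar>u x\<bar> powr r) = 0"
    using assms by (subst nn_integral_0_iff_AE[symmetric]) auto
  thus ?thesis by eventually_elim simp
qed

lemma fibering_identities:
  fixes a b g I C D lam p q \<theta> \<alpha> G :: real
  assumes "a * g + I + b * G - C - lam * q * D = 0"
    and "(p - 1) * (a * g + I) + b * (p * \<theta> - 1) * G + \<alpha> * C - lam * q * (q - 1) * D = 0"
  shows "(q - p) * (a * g + I) + (q - p * \<theta>) * b * G = (q - 1 + \<alpha>) * C"
    and "(p - 1 + \<alpha>) * (a * g + I) + (p * \<theta> - 1 + \<alpha>) * b * G = lam * q * (q - 1 + \<alpha>) * D"
proof -
  have "(q - 1) * (a * g + I + b * G - C - lam * q * D)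
      - ((p - 1) * (a * g + I) + b * (p * \<theta> - 1) * G + \<alpha> * C - lam * q * (q - 1) * D)
    = (q - p) * (a * g + I) + (q - p * \<theta>) * b * G - (q - 1 + \<alpha>) * C"
    by (simp add: algebra_simps)
  thus "(q - p) * (a * g + I) + (q - p * \<theta>) * b * G = (q - 1 + \<alpha>) * C"
    using assms by simp
  have "\<alpha> * (a * g + I + b * G - C - lam * q * D)
      + ((p - 1) * (a * g + I) + b * (p * \<theta> - 1) * G + \<alpha> * C - lam * q * (q - 1) * D)
    = (p - 1 + \<alpha>) * (a * g + I) + (p * \<theta> - 1 + \<alpha>) * b * G - lam * q * (q - 1 + \<alpha>) * D"
    by (simp add: algebra_simps)
  thus "(p - 1 + \<alpha>) * (a * g + I) + (p * \<theta> - 1 + \<alpha>) * b * G = lam * q * (q - 1 + \<alpha>) * D"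
    using assms by simp
qed

lemma fibering_identities_bound:
  fixes a b g I C p q \<theta> \<alpha> K1 :: real
  assumes "(q - p) * (a * g + I) + (q - p * \<theta>) * b * g powr \<theta> = (q - 1 + \<alpha>) * C"
    and "(q - 1 + \<alpha>) * C \<le> K1 + (q - p) / 2 * I"
    and "0 \<le> a" "0 < b" "0 \<le> g" "0 \<le> I" "p < q" "p * \<theta> < q" "0 < \<theta>"
  shows "g \<le> (K1 / ((q - p * \<theta>) * b)) powr (1 / \<theta>)"
proof -
  have "(q - p) * I \<le> (q - p) * (a * g + I)" "0 \<le> (q - p) * I"
    using assms by (auto intro!: mult_left_mono)
  hence "g powr \<theta> * ((q - p * \<theta>) * b) \<le> K1"
    using assms(1,2) by (simp add: ac_simps)
  hence "g powr \<theta> \<le> K1 / ((q - p * \<theta>) * b)"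
    using assms by (simp add: pos_le_divide_eq)
  hence "(g powr \<theta>) powr (1 / \<theta>) \<le> (K1 / ((q - p * \<theta>) * b)) powr (1 / \<theta>)"
    using assms by (intro powr_mono2) auto
  thus ?thesis using assms by (simp add: powr_powr)
qed

lemma fibering_identities_small_lambda:
  fixes a b p q \<theta> \<alpha> lam g I D L K e G :: real
  assumes identity: "(p - 1 + \<alpha>) * (a * g + I) + (p * \<theta> - 1 + \<alpha>) * b * g powr \<theta> = lam * q * (q - 1 + \<alpha>) * D"
    and D: "q * (q - 1 + \<alpha>) * D \<le> L * (I + K * g powr e)"
    and g: "0 \<le> g" "g \<le> G" and I: "0 \<le> I" and lam: "0 < lam"
    and L: "0 \<le> L" and K: "0 \<le> K" and e: "1 < e" and b: "0 \<le> b" and p\<theta>: "1 \<le> p * \<theta> + \<alpha>"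
    and small: "lam * L \<le> p - 1 + \<alpha>" "lam * L * K * G powr (e - 1) < (p - 1 + \<alpha>) * a"
  shows "g = 0"
proof -
  have "g powr e = g * g powr (e - 1)"
    using g by (cases "g = 0") (simp_all add: powr_diff)
  also have "\<dots> \<le> g * G powr (e - 1)"
    using g e by (intro mult_left_mono powr_mono2) auto
  finally have "L * (I + K * g powr e) \<le> L * (I + K * (g * G powr (e - 1)))"
    using L K by (intro mult_left_mono add_left_mono) auto
  hence "lam * (q * (q - 1 + \<alpha>) * D) \<le> lam * (L * (I + K * (g * G powr (e - 1))))"
    using D lam by (intro mult_left_mono) auto
  moreover have "0 \<le> (p * \<theta> - 1 + \<alpha>) * b * g powr \<theta>" using p\<theta> b by simp
  ultimately have "(p - 1 + \<alpha>) * (a * g + I) \<le> lam * L * I + lam * L * K * G powr (e - 1) * g"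
    using identity by (simp add: algebra_simps)
  moreover have "lam * L * I \<le> (p - 1 + \<alpha>) * I"
    using small(1) I by (rule mult_right_mono)
  ultimately have "(p - 1 + \<alpha>) * a * g \<le> lam * L * K * G powr (e - 1) * g"
    by (simp add: algebra_simps)
  moreover have "lam * L * K * G powr (e - 1) * g < (p - 1 + \<alpha>) * a * g" if "0 < g"
    using small(2) that by (rule mult_strict_right_mono)
  ultimately show "g = 0" using g by fastforce
qed

lemma fibering_identities_force_zero:
  fixes a b p q \<theta> \<alpha> M E m \<delta> \<gamma> K e :: real
  assumes a: "0 < a" and b: "0 < b" and p: "1 < p" and \<theta>: "1 < \<theta>" and q: "p * \<theta> < q"
    and \<alpha>: "0 < \<alpha>" and M: "0 \<le> M" and \<delta>: "(q - 1 + \<alpha>) * M * \<delta> = (q - p) / 2"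
    and \<gamma>: "0 \<le> \<gamma>" and K: "0 \<le> K" and e: "1 < e"
  obtains \<Lambda> where "0 < \<Lambda>"
    "\<And>lam g I C D. 0 < lam \<Longrightarrow> lam < \<Lambda> \<Longrightarrow> 0 \<le> g \<Longrightarrow> 0 \<le> I \<Longrightarrow>
      a * g + I + b * g powr \<theta> - C - lam * q * D = 0 \<Longrightarrow>
      (p - 1) * (a * g + I) + b * (p * \<theta> - 1) * g powr \<theta> + \<alpha> * C - lam * q * (q - 1) * D = 0 \<Longrightarrow>
      C \<le> M * (E * m + \<delta> * I) \<Longrightarrow> D \<le> \<gamma> * (I + K * g powr e) \<Longrightarrow> g = 0"
proof
  define K1 where "K1 = (q - 1 + \<alpha>) * M * E * m"
  define L where "L = q * (q - 1 + \<alpha>) * \<gamma>"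
  define gmax where "gmax = (K1 / ((q - p * \<theta>) * b)) powr (1 / \<theta>)"
  define Z where "Z = L * (1 + K * gmax powr (e - 1)) + 1"
  have "p < p * \<theta>" using p \<theta> by simp
  hence pq: "p < q" "0 < q - 1 + \<alpha>" "1 \<le> p * \<theta> + \<alpha>" using p q \<alpha> by linarith+
  hence L: "0 \<le> L" unfolding L_def using p \<gamma> by simp
  have "0 \<le> L * (1 + K * gmax powr (e - 1))" using L K by simp
  hence Z: "0 < Z" "L \<le> Z" "L * K * gmax powr (e - 1) \<le> Z"
    unfolding Z_def using L K by (linarith, simp_all add: algebra_simps)
  show "0 < (p - 1 + \<alpha>) * min a 1 / Z" using Z p \<alpha> a by simp
  fix lam g I C D
  assume lam: "0 < lam" "lam < (p - 1 + \<alpha>) * min a 1 / Z" and g: "0 \<le> g" and I: "0 \<le> I"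
    and phi: "a * g + I + b * g powr \<theta> - C - lam * q * D = 0"
      "(p - 1) * (a * g + I) + b * (p * \<theta> - 1) * g powr \<theta> + \<alpha> * C - lam * q * (q - 1) * D = 0"
    and C: "C \<le> M * (E * m + \<delta> * I)" and D: "D \<le> \<gamma> * (I + K * g powr e)"
  have "(q - 1 + \<alpha>) * C \<le> (q - 1 + \<alpha>) * (M * (E * m + \<delta> * I))"
    using C pq by (intro mult_left_mono) auto
  also have "\<dots> = K1 + (q - 1 + \<alpha>) * M * \<delta> * I"
    unfolding K1_def by (simp add: algebra_simps)
  finally have "g \<le> gmax"
    unfolding gmax_def \<delta> using a b g I pq q \<theta>
    by (intro fibering_identities_bound[OF fibering_identities(1)[OF phi]]) auto
  have D': "q * (q - 1 + \<alpha>) * D \<le> L * (I + K * g powr e)"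
    unfolding L_def using D pq p by (simp add: mult.assoc mult_left_mono)
  have c: "0 < p - 1 + \<alpha>" using p \<alpha> by simp
  have "lam * Z < (p - 1 + \<alpha>) * min a 1" using lam Z by (simp add: pos_less_divide_eq)
  moreover have "(p - 1 + \<alpha>) * min a 1 \<le> p - 1 + \<alpha>" "(p - 1 + \<alpha>) * min a 1 \<le> (p - 1 + \<alpha>) * a"
    using c by (simp_all add: mult_left_le)
  moreover have "lam * L \<le> lam * Z" "lam * L * K * gmax powr (e - 1) \<le> lam * Z"
    using mult_left_mono[OF Z(2), of lam] mult_left_mono[OF Z(3), of lam] lam by (simp_all add: mult.assoc)
  ultimately have small: "lam * L \<le> p - 1 + \<alpha>" "lam * L * K * gmax powr (e - 1) < (p - 1 + \<alpha>) * a"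
    by linarith+
  show "g = 0"
    using b by (intro fibering_identities_small_lambda[OF fibering_identities(2)[OF phi] D' g \<open>g \<le> gmax\<close>
        I lam(1) L K e _ pq(3) small]) simp
qed

lemma Nehari0_null_for_small_lambda:
  fixes \<Omega> :: "(real^'n) set" and c :: "real^'n \<Rightarrow> real" and F :: "real^'n \<Rightarrow> real \<Rightarrow> real"
  assumes s: "0 < s" and p: "1 < p" and n: "p * s < real CARD('n)"
    and \<Omega>: "\<Omega> \<in> sets lebesgue" "bounded \<Omega>"
    and a: "0 < a" and b: "0 < b" and \<theta>: "1 < \<theta>" and \<alpha>: "0 < \<alpha>" "\<alpha> < 1"
    and q: "p * \<theta> < q" "q \<le> real CARD('n) * p / (real CARD('n) - p * s)"
    and c: "AE x in lebesgue. x \<in> \<Omega> \<longrightarrow> 0 \<le> c x \<and> c x \<le> M" and M: "0 < M"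
    and F: "\<And>x t. \<bar>F x t\<bar> \<le> \<gamma> * \<bar>t\<bar> powr q"
  obtains \<Lambda> where "0 < \<Lambda>"
    "\<And>lam u. 0 < lam \<Longrightarrow> lam < \<Lambda> \<Longrightarrow> u \<in> Nehari0 p s \<Omega> a b \<theta> \<alpha> c lam q F \<Longrightarrow>
      AE x in lebesgue. u x = 0"
proof -
  define e where "e = real CARD('n) / (real CARD('n) - p * s)"
  have "p < p * \<theta>" using p \<theta> by simp
  hence pq: "p < q" "0 < q - 1 + \<alpha>" using p q \<alpha> by linarith+
  have e: "1 < e" "q \<le> p * e"
    using s p n q(2) unfolding e_def by (auto simp: field_simps)
  obtain K where K: "0 < K" and sobolev: "\<And>u. u \<in> X0 p s \<Omega> \<Longrightarrow>
      (\<integral>\<^sup>+ x. ennreal (\<bar>u x\<bar> powr (p * e)) \<partial>lebesgue) \<le> ennreal ((K * enn2real (gagliardo_int p s u)) powr e)"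
    using X0_fractional_sobolev[OF s _ n \<Omega>(2)] p unfolding e_def by auto
  define \<delta> where "\<delta> = (q - p) / (2 * ((q - 1 + \<alpha>) * M))"
  have \<delta>: "0 < \<delta>" "(q - 1 + \<alpha>) * M * \<delta> = (q - p) / 2"
    unfolding \<delta>_def using pq M by simp_all
  obtain E where E: "0 \<le> E" "\<And>t. 0 \<le> t \<Longrightarrow> t powr (1 - \<alpha>) \<le> E + \<delta> * t powr p"
    using powr_le_const_add_small_powr[of "1 - \<alpha>" p \<delta>] \<alpha> p \<delta> by auto
  have \<gamma>: "0 \<le> \<gamma>" using F[of undefined 1] by simp
  obtain \<Lambda> where \<Lambda>: "0 < \<Lambda>" and small_lambda: "\<And>lam g I C D. 0 < lam \<Longrightarrow> lam < \<Lambda> \<Longrightarrow> 0 \<le> g \<Longrightarrow> 0 \<le> I \<Longrightarrow>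
      a * g + I + b * g powr \<theta> - C - lam * q * D = 0 \<Longrightarrow>
      (p - 1) * (a * g + I) + b * (p * \<theta> - 1) * g powr \<theta> + \<alpha> * C - lam * q * (q - 1) * D = 0 \<Longrightarrow>
      C \<le> M * (E * measure lebesgue \<Omega> + \<delta> * I) \<Longrightarrow> D \<le> \<gamma> * (I + K powr e * g powr e) \<Longrightarrow> g = 0"
    using fibering_identities_force_zero[OF a b p \<theta> q(1) \<alpha>(1) less_imp_le[OF M] \<delta>(2) \<gamma> powr_ge_zero e(1)]
    by blast
  show thesis
  proof (rule that[OF \<Lambda>])
    fix lam u
    assume lam: "0 < lam" "lam < \<Lambda>" and Nehari: "u \<in> Nehari0 p s \<Omega> a b \<theta> \<alpha> c lam q F"
    hence u: "u \<in> X0 p s \<Omega>" unfolding Nehari0_def by auto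
    hence um: "u \<in> borel_measurable lebesgue" unfolding X0_def by auto
    define g where "g = enn2real (gagliardo_int p s u)"
    define I where "I = (LINT x:\<Omega>|lebesgue. \<bar>u x\<bar> powr p)"
    define C where "C = (LINT x:\<Omega>|lebesgue. c x * max (u x) 0 powr (1 - \<alpha>))"
    define D where "D = (LINT x:\<Omega>|lebesgue. F x (max (u x) 0))"
    have g: "0 \<le> g" and I: "0 \<le> I"
      unfolding g_def I_def set_lebesgue_integral_def by simp_all
    have sob: "(\<integral>\<^sup>+ x. ennreal (\<bar>u x\<bar> powr (p * e)) \<partial>lebesgue) \<le> ennreal (K powr e * g powr e)"
      using sobolev[OF u] K g unfolding g_def by (simp add: powr_mult)
    have "0 < p" using p by simp
    note identities = Nehari0_fibering_identities[OF Nehari this, folded g_def I_def C_def D_def]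
    note estimates = fibering_term_estimates[where F = F and \<gamma> = \<gamma>,
        OF bounded_set_imp_lmeasurable[OF \<Omega>(2,1)] um sob _ _ _ _ c _ E(2) E(1) _ F, folded I_def C_def D_def]
    have "g = 0"
      using estimates \<open>0 < p\<close> pq e M \<delta>(1) K g by (intro small_lambda[OF lam g I identities]) auto
    hence "(\<integral>\<^sup>+ x. ennreal (\<bar>u x\<bar> powr (p * e)) \<partial>lebesgue) \<le> 0"
      using sob e by simp
    thus "AE x in lebesgue. u x = 0" by (rule AE_zero_if_nn_integral_powr_zero[OF um])
  qed
qed

lemma null_in_Nehari0:
  assumes "u \<in> X0 p s \<Omega>" "AE x in lebesgue. u x = 0" "\<And>x. F x 0 = 0"
  shows "u \<in> Nehari0 p s \<Omega> a b \<theta> \<alpha> c lam q F"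
proof -
  have "(LINT x:\<Omega>|lebesgue. \<bar>u x\<bar> powr p) = 0"
    "(LINT x:\<Omega>|lebesgue. c x * max (u x) 0 powr (1 - \<alpha>)) = 0"
    "(LINT x:\<Omega>|lebesgue. F x (max (u x) 0)) = 0"
    unfolding set_lebesgue_integral_def using assms(2,3)
    by (auto intro!: integral_eq_zero_AE)
  thus ?thesis
    using assms(1) gagliardo_int_null[OF assms(2)]
    by (simp add: Nehari0_def phi1_def phi2_def X0norm_def Lnorm_def)
qed

theorem lemma2p2:
  fixes \<Omega> :: "(real^'n) set"
    and s p a b \<theta> \<alpha> q \<gamma> :: real
    and c :: "real^'n \<Rightarrow> real"
    and f F :: "real^'n \<Rightarrow> real \<Rightarrow> real"
  assumes "0 < s" "s < 1" "1 < p" "real CARD('n) > p * s"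
    and "smooth_bounded_domain \<Omega>"
    and "0 < a" "0 < b" "1 < \<theta>" "0 < \<alpha>" "\<alpha> < 1"
    and "c \<in> borel_measurable lebesgue" "\<exists>M. AE x in lebesgue. \<bar>c x\<bar> \<le> M" "\<forall>x\<in>\<Omega>. 0 \<le> c x"
    and "p * \<theta> < q" "q \<le> real CARD('n) * p / (real CARD('n) - p * s)"
    and "\<forall>x t k. 0 < k \<longrightarrow> f x (k * t) = k powr (q - 1) * f x t"
    and "\<forall>x t. F x t = (LBINT \<tau>=0..t. f x \<tau>)"
    and "\<forall>x t. q * F x t = t * f x t"
    and "\<forall>x t. \<bar>F x t\<bar> \<le> \<gamma> * \<bar>t\<bar> powr q"
  shows "\<exists>\<Lambda>>0. \<forall>lam. 0 < lam \<and> lam < \<Lambda> \<longrightarrow>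
           Nehari0 p s \<Omega> a b \<theta> \<alpha> c lam q F = {u \<in> X0 p s \<Omega>. AE x in lebesgue. u x = 0}"
proof -
  have \<Omega>: "\<Omega> \<in> sets lebesgue" "bounded \<Omega>"
    using assms(5) lmeasurable_open unfolding smooth_bounded_domain_def by auto
  obtain M where "AE x in lebesgue. \<bar>c x\<bar> \<le> M" using assms(12) by blast
  hence c: "AE x in lebesgue. x \<in> \<Omega> \<longrightarrow> 0 \<le> c x \<and> c x \<le> max M 1"
    by eventually_elim (use assms(13) in auto)
  obtain \<Lambda> where "0 < \<Lambda>" and small_lambda: "\<And>lam u. 0 < lam \<Longrightarrow> lam < \<Lambda> \<Longrightarrow>
      u \<in> Nehari0 p s \<Omega> a b \<theta> \<alpha> c lam q F \<Longrightarrow> AE x in lebesgue. u x = 0"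
    using Nehari0_null_for_small_lambda[where F = F, OF assms(1,3,4) \<Omega> assms(6-10,14,15) c
        max.strict_coboundedI2[OF zero_less_one] assms(19)[rule_format]] by blast
  have "F x 0 = 0" for x using assms(19)[rule_format, of x 0] by simp
  hence "\<And>lam. Nehari0 p s \<Omega> a b \<theta> \<alpha> c lam q F \<supseteq> {u \<in> X0 p s \<Omega>. AE x in lebesgue. u x = 0}"
    using null_in_Nehari0 by blast
  moreover have "\<And>lam. Nehari0 p s \<Omega> a b \<theta> \<alpha> c lam q F \<subseteq> X0 p s \<Omega>"
    unfolding Nehari0_def by blast
  ultimately show ?thesis
    using \<open>0 < \<Lambda>\<close> small_lambda by (intro exI[of _ \<Lambda>]) blast
qed

end
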